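(* Assume (C1) and (C2). Then for every $u\in\mathbb{R}^{\mathbb{Z}_K\times\mathbb{Z}_M}$, $\sum_{k\in\mathbb{Z}_K}\sum_{j\in\mathbb{Z}_M}\big(u_{k,j}B_{k,j}(u)-\partial_{k,j}B_{k,j}(u)\big)=0.$
   Context: Fix integers $K,M\ge1$; $\mathbb{Z}_m=\mathbb{Z}/m\mathbb{Z}$, $\mathbb{Z}_m^*=\mathbb{Z}_m\setminus\{0\}$; component indices modulo $K$, site indices modulo $M$. Real coefficients $\alpha_k$, $\beta_k^l,\gamma_k^l$ ($l\in\mathbb{Z}_K^*$), $\lambda_k^{k-l,k-l'}$ ($l,l'\in\mathbb{Z}_K^*$, $l\ne l'$) are given. For $u\in\mathbb{R}^{\mathbb{Z}_K\times\mathbb{Z}_M}$: $w_{k,j}=\frac13(u_{k,j}^2+u_{k,j}u_{k,j+1}+u_{k,j+1}^2)$, $b_{k,j}^l=\frac12(u_{k,j}u_{k+l,j}+u_{k,j+1}u_{k+l,j+1})$, $r_{k,j}^l=u_{k-l,j}u_{k-l,j+1}$, $p_{k,j}^{l,l'}=\frac16(2u_{k-l,j}u_{k-l',j}+u_{k-l,j}u_{k-l',j+1}+u_{k-l,j+1}u_{k-l',j}+2u_{k-l,j+1}u_{k-l',j+1})$, $G_{k,j}=\alpha_k w_{k,j}+\sum_{l\in\mathbb{Z}_K^*}\beta_k^l b_{k,j}^l+\sum_{l\in\mathbb{Z}_K^*}\gamma_k^l r_{k,j}^l+\sum_{l\in\mathbb{Z}_K^*}\sum_{l'\in\mathbb{Z}_K^*,l'\ne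 l}\lambda_k^{k-l,k-l'}p_{k,j}^{l,l'}$, $B_{k,j}(u)=G_{k,j}-G_{k,j-1}$; $\partial_{k,j}=\partial/\partial u_{k,j}$. (C1) $\beta_k^a=2\gamma_{k+a}^a$ for all $k$, $a\in\mathbb{Z}_K^*$; (C2) $\lambda_k^{k-a,k-a'}=\lambda_k^{k-a',k-a}=\lambda_{k-a}^{k,k-a'}$ for all $k$ and $a,a'\in\mathbb{Z}_K^*$, $a\ne a'$. *)

theory Defs
  imports "HOL-Analysis.Analysis"
begin

text \<open>Configurations u in R^(Z_K x Z_M) are represented by functions
  u :: int * int => real, of which only the values at (k,j) with
  0 <= k < K, 0 <= j < M matter; all indices are reduced mod K resp. mod M.
  Z_K^* is represented by {1..<K}.  Coefficients are functions of int
  arguments that are only evaluated at reduced indices.\<close>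

definition uu :: "int \<Rightarrow> int \<Rightarrow> (int \<times> int \<Rightarrow> real) \<Rightarrow> int \<Rightarrow> int \<Rightarrow> real" where
  "uu K M u k j = u (k mod K, j mod M)"

definition wt :: "int \<Rightarrow> int \<Rightarrow> (int \<times> int \<Rightarrow> real) \<Rightarrow> int \<Rightarrow> int \<Rightarrow> real" where
  "wt K M u k j = (1/3) * ((uu K M u k j)^2 + uu K M u k j * uu K M u k (j+1) + (uu K M u k (j+1))^2)"

definition bt :: "int \<Rightarrow> int \<Rightarrow> (int \<times> int \<Rightarrow> real) \<Rightarrow> int \<Rightarrow> int \<Rightarrow> int \<Rightarrow> real" where
  "bt K M u k j l = (1/2) * (uu K M u k j * uu K M u (k+l) j + uu K M u k (j+1) * uu K M u (k+l) (j+1))"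

definition rt :: "int \<Rightarrow> int \<Rightarrow> (int \<times> int \<Rightarrow> real) \<Rightarrow> int \<Rightarrow> int \<Rightarrow> int \<Rightarrow> real" where
  "rt K M u k j l = uu K M u (k-l) j * uu K M u (k-l) (j+1)"

definition pt :: "int \<Rightarrow> int \<Rightarrow> (int \<times> int \<Rightarrow> real) \<Rightarrow> int \<Rightarrow> int \<Rightarrow> int \<Rightarrow> int \<Rightarrow> real" where
  "pt K M u k j l l' = (1/6) * (2 * uu K M u (k-l) j * uu K M u (k-l') j
      + uu K M u (k-l) j * uu K M u (k-l') (j+1)
      + uu K M u (k-l) (j+1) * uu K M u (k-l') j
      + 2 * uu K M u (k-l) (j+1) * uu K M u (k-l') (j+1))"

definition Gt :: "int \<Rightarrow> int \<Rightarrow> (int \<Rightarrow> real) \<Rightarrow> (int \<Rightarrow> int \<Rightarrow> real) \<Rightarrow> (int \<Rightarrow> int \<Rightarrow> real)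
    \<Rightarrow> (int \<Rightarrow> int \<Rightarrow> int \<Rightarrow> real) \<Rightarrow> (int \<times> int \<Rightarrow> real) \<Rightarrow> int \<Rightarrow> int \<Rightarrow> real" where
  "Gt K M alpha beta gamma lam u k j =
     alpha (k mod K) * wt K M u k j
     + (\<Sum>l\<in>{1..<K}. beta (k mod K) l * bt K M u k j l)
     + (\<Sum>l\<in>{1..<K}. gamma (k mod K) l * rt K M u k j l)
     + (\<Sum>l\<in>{1..<K}. \<Sum>l'\<in>{1..<K} - {l}.
          lam (k mod K) ((k-l) mod K) ((k-l') mod K) * pt K M u k j l l')"

definition Bt :: "int \<Rightarrow> int \<Rightarrow> (int \<Rightarrow> real) \<Rightarrow> (int \<Rightarrow> int \<Rightarrow> real) \<Rightarrow> (int \<Rightarrow> int \<Rightarrow> real)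
    \<Rightarrow> (int \<Rightarrow> int \<Rightarrow> int \<Rightarrow> real) \<Rightarrow> (int \<times> int \<Rightarrow> real) \<Rightarrow> int \<Rightarrow> int \<Rightarrow> real" where
  "Bt K M alpha beta gamma lam u k j =
     Gt K M alpha beta gamma lam u k j - Gt K M alpha beta gamma lam u k (j-1)"

definition pderiv_at :: "int \<Rightarrow> int \<Rightarrow> ((int \<times> int \<Rightarrow> real) \<Rightarrow> real) \<Rightarrow> (int \<times> int \<Rightarrow> real) \<Rightarrow> int \<Rightarrow> int \<Rightarrow> real" where
  "pderiv_at K M F u k j = deriv (\<lambda>t. F (u((k mod K, j mod M) := t))) (u (k mod K, j mod M))"

end

theory Submission
  imports Defs
begin

text \<open>Only the self-interaction term w of G feels u(k,j) in a way that survives in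
  B(k,j) = G(k,j) - G(k,j-1), so the derivative term is alpha(k) (u(k,j+1) - u(k,j-1)) / 3,
  which telescopes away in j. Summation by parts along the cycle turns the sum over j of
  u(k,j) B(k,j) into the sum of G(k,j) (u(k,j) - u(k,j+1)). Conditions (C1) and (C2) make G a
  discrete gradient: for consecutive columns a = u(-,j) and b = u(-,j+1) the sum over k of
  G(k,j) (a k - b k) equals E a - E b for a cubic energy E, so the sum over j telescopes
  as well.\<close>

lemma uu_mod_row [simp]: "uu K M u (k mod K) j = uu K M u k j"
  by (simp add: uu_def)

lemma uu_mod_col [simp]: "uu K M u k (j mod M) = uu K M u k j"
  by (simp add: uu_def)

lemma uu_fun_upd:
  "uu K M (u((k0, j0) := t)) k j = (if k mod K = k0 \<and> j mod M = j0 then t else uu K M u k j)"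
  by (simp add: uu_def)

lemma mod_shift_neq:
  fixes k l K :: int
  assumes "k \<in> {0..<K}" and "l \<in> {1..<K}"
  shows "(k + l) mod K \<noteq> k" "(k - l) mod K \<noteq> k"
proof -
  have "\<not> K dvd l"
    using assms(2) zdvd_not_zless by auto
  then show "(k + l) mod K \<noteq> k"
    using assms(1) by (metis add_diff_cancel_left' mod_eq_dvd_iff mod_pos_pos_trivial atLeastLessThan_iff)
  from \<open>\<not> K dvd l\<close> show "(k - l) mod K \<noteq> k"
    using assms(1)
    by (metis add_diff_cancel_left' mod_eq_dvd_iff mod_pos_pos_trivial atLeastLessThan_iff diff_diff_eq2)
qed

lemma sum_periodic_shift:
  fixes f :: "int \<Rightarrow> 'a::comm_monoid_add"
  assumes "N \<ge> 1" and periodic: "\<And>x. f (x mod N) = f x"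
  shows "(\<Sum>x\<in>{0..<N}. f (x + c)) = (\<Sum>x\<in>{0..<N}. f x)"
proof -
  have "(\<Sum>x\<in>{0..<N}. f ((x + c) mod N)) = (\<Sum>x\<in>{0..<N}. f x)"
    by (rule sum.reindex_bij_witness[where i="\<lambda>x. (x - c) mod N" and j="\<lambda>x. (x + c) mod N"])
       (use assms(1) in \<open>auto simp: mod_diff_left_eq mod_add_left_eq\<close>)
  then show ?thesis by (simp add: periodic)
qed

lemma sum_periodic_by_parts:
  fixes f g :: "int \<Rightarrow> 'a::comm_ring"
  assumes N: "N \<ge> 1" and f: "\<And>x. f (x mod N) = f x" and g: "\<And>x. g (x mod N) = g x"
  shows "(\<Sum>x\<in>{0..<N}. f x * (g x - g (x - 1))) = (\<Sum>x\<in>{0..<N}. g x * (f x - f (x + 1)))"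
proof -
  have "g (x mod N - 1) = g (x - 1)" for x
    by (metis g mod_diff_left_eq)
  then have "(\<Sum>x\<in>{0..<N}. f (x + 1) * g (x + 1 - 1)) = (\<Sum>x\<in>{0..<N}. f x * g (x - 1))"
    using sum_periodic_shift[OF N, of "\<lambda>x. f x * g (x - 1)" 1] by (simp add: f)
  then show ?thesis
    by (simp add: sum_subtractf right_diff_distrib mult.commute)
qed

lemma sum_periodic_shift_diff:
  fixes f :: "int \<Rightarrow> 'a::ab_group_add"
  assumes "N \<ge> 1" and "\<And>x. f (x mod N) = f x"
  shows "(\<Sum>x\<in>{0..<N}. f (x + c) - f (x + d)) = 0"
  using sum_periodic_shift[where f=f, OF assms, of c] sum_periodic_shift[where f=f, OF assms, of d]
  by (simp add: sum_subtractf)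

lemma pderiv_at_affine:
  assumes "\<And>t. F (u((k mod K, j mod M) := t)) = F u + c * (t - u (k mod K, j mod M))"
  shows "pderiv_at K M F u k j = c"
proof -
  have "((\<lambda>t. F u + c * (t - u (k mod K, j mod M))) has_real_derivative c) (at t)" for t
    by (auto intro!: derivative_eq_intros)
  then show ?thesis
    unfolding pderiv_at_def assms by (rule DERIV_imp_deriv)
qed

text \<open>The u(k,j)-dependence of the b-terms cancels between G(k,j) and G(k,j-1), and the r- and
  p-terms at component k only involve other components; B(k,j) is therefore affine in u(k,j).\<close>

lemma Bt_fun_upd:
  assumes k: "k \<in> {0..<K}" and j: "j \<in> {0..<M}"
  shows "Bt K M alpha beta gamma lam (u((k, j) := t)) k j
    = Bt K M alpha beta gamma lam u k j
      + alpha k * (uu K M u k (j + 1) - uu K M u k (j - 1)) / 3 * (t - u (k, j))"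
proof (cases "M = 1")
  case True
  txt \<open>With a single site j + 1 and j - 1 coincide with j, so G does not depend on j and B vanishes.\<close>
  then show ?thesis by (simp add: Bt_def Gt_def wt_def bt_def rt_def pt_def uu_def)
next
  case False
  let ?v = "u((k, j) := t)"
  have km: "k mod K = k" and jm: "j mod M = j" using k j by auto
  have j1: "(j + 1) mod M \<noteq> j" "(j - 1) mod M \<noteq> j"
    using mod_shift_neq[OF j, of 1] False j by auto
  have kl: "(k + l) mod K \<noteq> k" "(k - l) mod K \<noteq> k" if "l \<in> {1..<K}" for l
    using mod_shift_neq[OF k that] by auto
  have r: "(\<Sum>l\<in>{1..<K}. gamma k l * rt K M ?v k j' l) = (\<Sum>l\<in>{1..<K}. gamma k l * rt K M u k j' l)" for j'
    by (intro sum.cong) (simp_all add: rt_def uu_fun_upd kl)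
  have p: "(\<Sum>l\<in>{1..<K}. \<Sum>l'\<in>{1..<K} - {l}. lam k ((k-l) mod K) ((k-l') mod K) * pt K M ?v k j' l l')
      = (\<Sum>l\<in>{1..<K}. \<Sum>l'\<in>{1..<K} - {l}. lam k ((k-l) mod K) ((k-l') mod K) * pt K M u k j' l l')" for j'
    by (intro sum.cong) (simp_all add: pt_def uu_fun_upd kl)
  have b: "(\<Sum>l\<in>{1..<K}. beta k l * bt K M ?v k j l) - (\<Sum>l\<in>{1..<K}. beta k l * bt K M ?v k (j - 1) l)
      = (\<Sum>l\<in>{1..<K}. beta k l * bt K M u k j l) - (\<Sum>l\<in>{1..<K}. beta k l * bt K M u k (j - 1) l)"
    unfolding sum_subtractf[symmetric]
    by (intro sum.cong) (simp_all add: bt_def uu_fun_upd kl km jm j1, simp add: field_simps)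
  have w: "alpha k * wt K M ?v k j - alpha k * wt K M ?v k (j - 1)
      = alpha k * wt K M u k j - alpha k * wt K M u k (j - 1)
        + alpha k * (uu K M u k (j + 1) - uu K M u k (j - 1)) / 3 * (t - u (k, j))"
    by (simp add: wt_def uu_fun_upd km jm j1 uu_def[of K M u k j], simp add: power2_eq_square field_simps)
  show ?thesis
    using r p b w unfolding Bt_def Gt_def km by (simp add: algebra_simps)
qed

lemma bij_betw_mod_diff:
  fixes k K :: int
  assumes k: "k \<in> {0..<K}"
  shows "bij_betw (\<lambda>l. (k - l) mod K) {1..<K} ({0..<K} - {k})"
proof (rule bij_betw_byWitness[where f'="\<lambda>x. (k - x) mod K"])
  show "\<forall>l\<in>{1..<K}. (k - (k - l) mod K) mod K = l"
    by (simp add: mod_diff_right_eq)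
  show "\<forall>x\<in>{0..<K} - {k}. (k - (k - x) mod K) mod K = x"
    by (simp add: mod_diff_right_eq)
  show "(\<lambda>l. (k - l) mod K) ` {1..<K} \<subseteq> {0..<K} - {k}"
    using k mod_shift_neq(2)[OF k] by auto
  show "(\<lambda>x. (k - x) mod K) ` ({0..<K} - {k}) \<subseteq> {1..<K}"
  proof (rule image_subsetI)
    fix x assume "x \<in> {0..<K} - {k}"
    then have x: "x \<in> {0..<K}" "x \<noteq> k" by auto
    have "(k - x) mod K \<noteq> 0"
      using x k by (auto simp: mod_eq_0_iff_dvd mod_eq_dvd_iff[symmetric])
    moreover have "0 \<le> (k - x) mod K" "(k - x) mod K < K"
      using k by auto
    ultimately show "(k - x) mod K \<in> {1..<K}"
      by simp
  qed
qed

definition distinct_triples :: "int \<Rightarrow> (int \<times> int \<times> int) set" where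
  "distinct_triples K = (SIGMA k:{0..<K}. SIGMA x:{0..<K} - {k}. {0..<K} - {k, x})"

lemma mem_distinct_triples [simp]:
  "(k, x, y) \<in> distinct_triples K \<longleftrightarrow>
     k \<in> {0..<K} \<and> x \<in> {0..<K} \<and> y \<in> {0..<K} \<and> distinct [k, x, y]"
  by (auto simp: distinct_triples_def)

lemma finite_distinct_triples [simp]: "finite (distinct_triples K)"
  by (simp add: distinct_triples_def)

lemma sum_distinct_triples_rotate:
  "(\<Sum>(k, x, y)\<in>distinct_triples K. F x y k) = (\<Sum>(k, x, y)\<in>distinct_triples K. F k x y)"
  by (rule sum.reindex_bij_witness[where i="\<lambda>(k, x, y). (y, k, x)" and j="\<lambda>(k, x, y). (x, y, k)"])
     auto

lemma sum_mod_diff_pairs_eq_distinct_triples: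
  fixes G :: "int \<Rightarrow> int \<Rightarrow> int \<Rightarrow> 'a::comm_monoid_add"
  shows "(\<Sum>k\<in>{0..<K}. \<Sum>l\<in>{1..<K}. \<Sum>l'\<in>{1..<K} - {l}. G k ((k - l) mod K) ((k - l') mod K))
       = (\<Sum>(k, x, y)\<in>distinct_triples K. G k x y)"
proof -
  have "(\<Sum>l\<in>{1..<K}. \<Sum>l'\<in>{1..<K} - {l}. G k ((k - l) mod K) ((k - l') mod K))
      = (\<Sum>x\<in>{0..<K} - {k}. \<Sum>y\<in>{0..<K} - {k, x}. G k x y)" if k: "k \<in> {0..<K}" for k
  proof -
    let ?f = "\<lambda>l. (k - l) mod K"
    have f: "bij_betw ?f {1..<K} ({0..<K} - {k})"
      by (rule bij_betw_mod_diff[OF k])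
    have "bij_betw ?f ({1..<K} - {l}) ({0..<K} - {k, ?f l})" if "l \<in> {1..<K}" for l
    proof -
      have "bij_betw ?f ({1..<K} - {l}) ({0..<K} - {k} - {?f l})"
        using that bij_betw_apply[OF f that] by (intro bij_betw_DiffI[OF f]) auto
      moreover have "{0..<K} - {k} - {?f l} = {0..<K} - {k, ?f l}"
        by auto
      ultimately show ?thesis
        by simp
    qed
    then have "(\<Sum>l'\<in>{1..<K} - {l}. G k (?f l) (?f l')) = (\<Sum>y\<in>{0..<K} - {k, ?f l}. G k (?f l) y)"
      if "l \<in> {1..<K}" for l
      using that by (intro sum.reindex_bij_betw) blast
    then have "(\<Sum>l\<in>{1..<K}. \<Sum>l'\<in>{1..<K} - {l}. G k (?f l) (?f l'))
        = (\<Sum>l\<in>{1..<K}. \<Sum>y\<in>{0..<K} - {k, ?f l}. G k (?f l) y)"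
      by (rule sum.cong[OF refl])
    also have "\<dots> = (\<Sum>x\<in>{0..<K} - {k}. \<Sum>y\<in>{0..<K} - {k, x}. G k x y)"
      by (rule sum.reindex_bij_betw[OF f])
    finally show ?thesis .
  qed
  then show ?thesis
    by (simp add: distinct_triples_def sum.Sigma[symmetric] del: insert_Diff_single)
qed

lemma lam_rotation_invariant:
  fixes lam :: "int \<Rightarrow> int \<Rightarrow> int \<Rightarrow> real"
  assumes C2: "\<And>k a a'. k \<in> {0..<K} \<Longrightarrow> a \<in> {1..<K} \<Longrightarrow> a' \<in> {1..<K} \<Longrightarrow> a \<noteq> a' \<Longrightarrow>
              lam k ((k - a) mod K) ((k - a') mod K) = lam k ((k - a') mod K) ((k - a) mod K)
            \<and> lam k ((k - a') mod K) ((k - a) mod K) = lam ((k - a) mod K) k ((k - a') mod K)"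
    and kxy: "(k, x, y) \<in> distinct_triples K"
  shows "lam x y k = lam k x y \<and> lam y k x = lam k x y"
proof -
  have swap: "lam k x y = lam k y x \<and> lam k y x = lam x k y" if "(k, x, y) \<in> distinct_triples K" for k x y
  proof -
    from that have k: "k \<in> {0..<K}" and xy: "x \<in> {0..<K} - {k}" "y \<in> {0..<K} - {k}" "x \<noteq> y"
      by auto
    have onto: "(\<lambda>l. (k - l) mod K) ` {1..<K} = {0..<K} - {k}"
      using bij_betw_mod_diff[OF k] by (rule bij_betw_imp_surj_on)
    obtain a a' where a: "a \<in> {1..<K}" "x = (k - a) mod K" and a': "a' \<in> {1..<K}" "y = (k - a') mod K"
      using xy(1,2) unfolding onto[symmetric] by blast
    moreover have "a \<noteq> a'"
      using a a' xy(3) by auto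
    ultimately show ?thesis
      using C2[OF k a(1) a'(1)] by simp
  qed
  have "(x, k, y) \<in> distinct_triples K" "(y, x, k) \<in> distinct_triples K"
    using kxy by auto
  then show ?thesis
    using swap[OF kxy] swap[of x k y] swap[of y x k] by linarith
qed

lemma sum_triple_coupling_gradient:
  fixes a b :: "int \<Rightarrow> real" and lam :: "int \<Rightarrow> int \<Rightarrow> int \<Rightarrow> real"
  assumes pa: "\<And>x. a (x mod K) = a x" and pb: "\<And>x. b (x mod K) = b x"
    and rot: "\<And>k x y. (k, x, y) \<in> distinct_triples K \<Longrightarrow> lam x y k = lam k x y \<and> lam y k x = lam k x y"
  shows "(\<Sum>k\<in>{0..<K}. (\<Sum>l\<in>{1..<K}. \<Sum>l'\<in>{1..<K} - {l}. lam k ((k - l) mod K) ((k - l') mod K) *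
            ((1/6) * (2 * a (k - l) * a (k - l') + a (k - l) * b (k - l')
                      + b (k - l) * a (k - l') + 2 * b (k - l) * b (k - l')))) * (a k - b k))
     = (\<Sum>(k, x, y)\<in>distinct_triples K. lam k x y * a k * a x * a y) / 3
       - (\<Sum>(k, x, y)\<in>distinct_triples K. lam k x y * b k * b x * b y) / 3"
    (is "?L = _")
proof -
  define F where "F k x y = lam k x y * ((1/6) * (2 * a x * a y + a x * b y + b x * a y + 2 * b x * b y)) * (a k - b k)"
    for k x y
  have "?L = (\<Sum>(k, x, y)\<in>distinct_triples K. F k x y)"
    unfolding sum_mod_diff_pairs_eq_distinct_triples[symmetric, of F]
    by (simp add: F_def sum_distrib_right pa pb)
  txt \<open>Symmetrizing over the cyclic rotations, which leave lam invariant, produces a difference of cubes.\<close>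
  moreover have "F k x y + F x y k + F y k x = lam k x y * a k * a x * a y - lam k x y * b k * b x * b y"
    if "(k, x, y) \<in> distinct_triples K" for k x y
    using rot[OF that] by (simp add: F_def field_simps)
  then have "(\<Sum>(k, x, y)\<in>distinct_triples K. F k x y + F x y k + F y k x)
      = (\<Sum>(k, x, y)\<in>distinct_triples K. lam k x y * a k * a x * a y - lam k x y * b k * b x * b y)"
    by (intro sum.cong) auto
  ultimately show ?thesis
    using sum_distinct_triples_rotate[of F K] sum_distinct_triples_rotate[of "\<lambda>x y k. F y k x" K]
    by (simp add: sum.distrib sum_subtractf case_prod_beta)
qed

lemma sum_pair_coupling_gradient:
  fixes a b :: "int \<Rightarrow> real" and beta gamma :: "int \<Rightarrow> int \<Rightarrow> real"
  assumes K: "K \<ge> 1" and pa: "\<And>x. a (x mod K) = a x" and pb: "\<And>x. b (x mod K) = b x"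
    and C1: "\<And>k l. k \<in> {0..<K} \<Longrightarrow> l \<in> {1..<K} \<Longrightarrow> beta k l = 2 * gamma ((k + l) mod K) l"
  shows "(\<Sum>k\<in>{0..<K}. ((\<Sum>l\<in>{1..<K}. beta k l * ((1/2) * (a k * a (k + l) + b k * b (k + l))))
            + (\<Sum>l\<in>{1..<K}. gamma k l * (a (k - l) * b (k - l)))) * (a k - b k))
   = (\<Sum>k\<in>{0..<K}. \<Sum>l\<in>{1..<K}. gamma ((k + l) mod K) l * a k ^ 2 * a (k + l))
     - (\<Sum>k\<in>{0..<K}. \<Sum>l\<in>{1..<K}. gamma ((k + l) mod K) l * b k ^ 2 * b (k + l))"
proof -
  txt \<open>Shifting k by l attaches the r-term to the same pair (k, k + l) as the b-term.\<close>
  have shift: "(\<Sum>k\<in>{0..<K}. gamma k l * (a (k - l) * b (k - l)) * (a k - b k))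
      = (\<Sum>k\<in>{0..<K}. gamma ((k + l) mod K) l * (a k * b k * (a (k + l) - b (k + l))))" for l
  proof -
    define f where "f k = gamma (k mod K) l * (a (k - l) * b (k - l)) * (a k - b k)" for k
    have "f (x mod K) = f x" for x
      unfolding f_def by (metis pa pb mod_diff_left_eq mod_mod_trivial)
    then have "(\<Sum>k\<in>{0..<K}. f (k + l)) = (\<Sum>k\<in>{0..<K}. f k)"
      by (rule sum_periodic_shift[OF K])
    then show ?thesis
      by (simp add: f_def mult.assoc)
  qed
  have "(\<Sum>k\<in>{0..<K}. ((\<Sum>l\<in>{1..<K}. beta k l * ((1/2) * (a k * a (k + l) + b k * b (k + l))))
            + (\<Sum>l\<in>{1..<K}. gamma k l * (a (k - l) * b (k - l)))) * (a k - b k))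
      = (\<Sum>k\<in>{0..<K}. \<Sum>l\<in>{1..<K}. beta k l * ((1/2) * (a k * a (k + l) + b k * b (k + l))) * (a k - b k))
        + (\<Sum>l\<in>{1..<K}. \<Sum>k\<in>{0..<K}. gamma k l * (a (k - l) * b (k - l)) * (a k - b k))"
    by (simp add: distrib_right sum.distrib sum_distrib_right sum.swap[of _ "{1..<K}"])
  also have "\<dots> = (\<Sum>k\<in>{0..<K}. \<Sum>l\<in>{1..<K}.
        gamma ((k + l) mod K) l * ((a k * a (k + l) + b k * b (k + l)) * (a k - b k)
                                   + a k * b k * (a (k + l) - b (k + l))))"
    by (simp add: shift sum.swap[of _ "{1..<K}"] C1 sum.distrib[symmetric], simp add: algebra_simps)
  also have "\<dots> = (\<Sum>k\<in>{0..<K}. \<Sum>l\<in>{1..<K}.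
        gamma ((k + l) mod K) l * a k ^ 2 * a (k + l) - gamma ((k + l) mod K) l * b k ^ 2 * b (k + l))"
    by (intro sum.cong refl) (simp add: algebra_simps power2_eq_square)
  finally show ?thesis
    by (simp add: sum_subtractf)
qed

definition cubic_energy :: "int \<Rightarrow> (int \<Rightarrow> real) \<Rightarrow> (int \<Rightarrow> int \<Rightarrow> real) \<Rightarrow> (int \<Rightarrow> int \<Rightarrow> int \<Rightarrow> real)
    \<Rightarrow> (int \<Rightarrow> real) \<Rightarrow> real" where
  "cubic_energy K alpha gamma lam a =
     (\<Sum>k\<in>{0..<K}. alpha k * a k ^ 3 / 3)
     + (\<Sum>k\<in>{0..<K}. \<Sum>l\<in>{1..<K}. gamma ((k + l) mod K) l * a k ^ 2 * a (k + l))
     + (\<Sum>(k, x, y)\<in>distinct_triples K. lam k x y * a k * a x * a y) / 3"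

lemma sum_Gt_mul_diff_eq_cubic_energy_diff:
  fixes alpha :: "int \<Rightarrow> real" and beta gamma :: "int \<Rightarrow> int \<Rightarrow> real"
    and lam :: "int \<Rightarrow> int \<Rightarrow> int \<Rightarrow> real"
  assumes K: "K \<ge> 1"
    and C1: "\<And>k l. k \<in> {0..<K} \<Longrightarrow> l \<in> {1..<K} \<Longrightarrow> beta k l = 2 * gamma ((k + l) mod K) l"
    and rot: "\<And>k x y. (k, x, y) \<in> distinct_triples K \<Longrightarrow> lam x y k = lam k x y \<and> lam y k x = lam k x y"
  shows "(\<Sum>k\<in>{0..<K}. Gt K M alpha beta gamma lam u k j * (uu K M u k j - uu K M u k (j + 1)))
    = cubic_energy K alpha gamma lam (\<lambda>k. uu K M u k j)
      - cubic_energy K alpha gamma lam (\<lambda>k. uu K M u k (j + 1))"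
proof -
  define a where "a k = uu K M u k j" for k
  define b where "b k = uu K M u k (j + 1)" for k
  have pa: "a (x mod K) = a x" and pb: "b (x mod K) = b x" for x
    by (simp_all add: a_def b_def)
  let ?W = "\<lambda>k. alpha k * ((1/3) * (a k ^ 2 + a k * b k + b k ^ 2)) * (a k - b k)"
  let ?P = "\<lambda>k. ((\<Sum>l\<in>{1..<K}. beta k l * ((1/2) * (a k * a (k + l) + b k * b (k + l))))
            + (\<Sum>l\<in>{1..<K}. gamma k l * (a (k - l) * b (k - l)))) * (a k - b k)"
  let ?T = "\<lambda>k. (\<Sum>l\<in>{1..<K}. \<Sum>l'\<in>{1..<K} - {l}. lam k ((k - l) mod K) ((k - l') mod K) *
            ((1/6) * (2 * a (k - l) * a (k - l') + a (k - l) * b (k - l')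
                      + b (k - l) * a (k - l') + 2 * b (k - l) * b (k - l')))) * (a k - b k)"
  have "Gt K M alpha beta gamma lam u k j * (a k - b k) = ?W k + ?P k + ?T k" if "k \<in> {0..<K}" for k
    using that by (simp add: Gt_def wt_def bt_def rt_def pt_def a_def b_def distrib_right)
  then have "(\<Sum>k\<in>{0..<K}. Gt K M alpha beta gamma lam u k j * (a k - b k))
      = sum ?W {0..<K} + sum ?P {0..<K} + sum ?T {0..<K}"
    by (simp add: sum.distrib)
  moreover have "sum ?W {0..<K} = (\<Sum>k\<in>{0..<K}. alpha k * a k ^ 3 / 3) - (\<Sum>k\<in>{0..<K}. alpha k * b k ^ 3 / 3)"
    by (simp add: sum_subtractf[symmetric] power2_eq_square power3_eq_cube field_simps)
  ultimately show ?thesis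
    unfolding cubic_energy_def a_def[symmetric] b_def[symmetric]
    using sum_pair_coupling_gradient[where a=a and b=b and beta=beta and gamma=gamma, OF K pa pb C1]
      sum_triple_coupling_gradient[where a=a and b=b and lam=lam, OF pa pb rot]
    by simp
qed

lemma Gt_mod_col [simp]: "Gt K M alpha beta gamma lam u k (j mod M) = Gt K M alpha beta gamma lam u k j"
  by (simp add: Gt_def wt_def bt_def rt_def pt_def uu_def mod_simps)

lemma pderiv_at_Bt:
  assumes "k \<in> {0..<K}" and "j \<in> {0..<M}"
  shows "pderiv_at K M (\<lambda>v. Bt K M alpha beta gamma lam v k j) u k j
    = alpha k * (uu K M u k (j + 1) - uu K M u k (j - 1)) / 3"
  using assms by (intro pderiv_at_affine) (simp add: Bt_fun_upd)

lemma sum_uu_Bt_minus_pderiv_at_Bt: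
  assumes M: "M \<ge> 1" and k: "k \<in> {0..<K}"
  shows "(\<Sum>j\<in>{0..<M}. uu K M u k j * Bt K M alpha beta gamma lam u k j
            - pderiv_at K M (\<lambda>v. Bt K M alpha beta gamma lam v k j) u k j)
    = (\<Sum>j\<in>{0..<M}. Gt K M alpha beta gamma lam u k j * (uu K M u k j - uu K M u k (j + 1)))"
proof -
  have by_parts: "(\<Sum>j\<in>{0..<M}. uu K M u k j * Bt K M alpha beta gamma lam u k j)
      = (\<Sum>j\<in>{0..<M}. Gt K M alpha beta gamma lam u k j * (uu K M u k j - uu K M u k (j + 1)))"
    unfolding Bt_def by (rule sum_periodic_by_parts[OF M]) simp_all
  have "(\<Sum>j\<in>{0..<M}. pderiv_at K M (\<lambda>v. Bt K M alpha beta gamma lam v k j) u k j)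
      = alpha k * (\<Sum>j\<in>{0..<M}. uu K M u k (j + 1) - uu K M u k (j + - 1)) / 3"
    using k by (simp add: pderiv_at_Bt sum_distrib_left sum_divide_distrib)
  also have "\<dots> = 0"
    by (subst sum_periodic_shift_diff[OF M]) simp_all
  finally show ?thesis
    by (simp add: sum_subtractf by_parts)
qed

theorem lemma3p3:
  fixes K M :: int
    and alpha :: "int \<Rightarrow> real"
    and beta gamma :: "int \<Rightarrow> int \<Rightarrow> real"
    and lam :: "int \<Rightarrow> int \<Rightarrow> int \<Rightarrow> real"
    and u :: "int \<times> int \<Rightarrow> real"
  assumes K: "K \<ge> 1" and M: "M \<ge> 1"
    and C1: "\<And>k a. k \<in> {0..<K} \<Longrightarrow> a \<in> {1..<K} \<Longrightarrow> beta k a = 2 * gamma ((k + a) mod K) a"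
    and C2: "\<And>k a a'. k \<in> {0..<K} \<Longrightarrow> a \<in> {1..<K} \<Longrightarrow> a' \<in> {1..<K} \<Longrightarrow> a \<noteq> a' \<Longrightarrow>
              lam k ((k - a) mod K) ((k - a') mod K) = lam k ((k - a') mod K) ((k - a) mod K)
            \<and> lam k ((k - a') mod K) ((k - a) mod K) = lam ((k - a) mod K) k ((k - a') mod K)"
  shows "(\<Sum>k\<in>{0..<K}. \<Sum>j\<in>{0..<M}.
            uu K M u k j * Bt K M alpha beta gamma lam u k j
            - pderiv_at K M (\<lambda>v. Bt K M alpha beta gamma lam v k j) u k j) = 0"
proof -
  let ?E = "\<lambda>j. cubic_energy K alpha gamma lam (\<lambda>k. uu K M u k j)"
  have rot: "\<And>k x y. (k, x, y) \<in> distinct_triples K \<Longrightarrow> lam x y k = lam k x y \<and> lam y k x = lam k x y"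
    using lam_rotation_invariant[OF C2] by blast
  have "(\<Sum>k\<in>{0..<K}. \<Sum>j\<in>{0..<M}.
            uu K M u k j * Bt K M alpha beta gamma lam u k j
            - pderiv_at K M (\<lambda>v. Bt K M alpha beta gamma lam v k j) u k j)
      = (\<Sum>j\<in>{0..<M}. \<Sum>k\<in>{0..<K}. Gt K M alpha beta gamma lam u k j * (uu K M u k j - uu K M u k (j + 1)))"
    by (simp add: sum_uu_Bt_minus_pderiv_at_Bt[OF M] sum.swap[of _ "{0..<K}"])
  also have "\<dots> = (\<Sum>j\<in>{0..<M}. ?E (j + 0) - ?E (j + 1))"
    using sum_Gt_mul_diff_eq_cubic_energy_diff[where beta=beta and gamma=gamma and lam=lam, OF K C1 rot]
    by simp
  also have "\<dots> = 0"
    by (rule sum_periodic_shift_diff[OF M]) simp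
  finally show ?thesis .
qed

end
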